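(* Let $n\ge d\ge 1$ and let $(A,C)$ be a real OTSON pair ($A$ is $n\times n$, $C$ is $d\times n$). Let $\{\tilde Q(\theta):\theta\in\Theta\}$ be an orthogonal reduction parameterization of $O(d+1)$ to $e_1$, and for $\theta\in\Theta$ and $1\le k\le n$ let $Q^{(k)}(\theta)$ be its embedding defined below. Then there exist $\theta_1,\dots,\theta_n\in\Theta$ such that $$\begin{pmatrix} C\\ A\end{pmatrix}=Q^{(n)}(\theta_n)Q^{(n-1)}(\theta_{n-1})\cdots Q^{(2)}(\theta_2)Q^{(1)}(\theta_1)\begin{pmatrix}\mathbb{I}_n\\ 0_{d,n}\end{pmatrix}.$$
   Context: ${}^*$ denotes transpose; $e_k$ is the $k$-th unit vector; $0_{a,b}$ is the $a\times b$ zero matrix. $(A,C)$ is OTSON if $A^*A=\mathbb{I}_n-C^*C$ and the $(n+d)\times n$ stack $Q=\begin{pmatrix} C\\ A\end{pmatrix}$ satisfies $Q_{i,j}=0$ for $j>i$. An orthogonal reduction parameterization (ORP) of $O(m)$ to $e_k$ is a family $\{\tilde Q(\theta):\theta\in\Theta\}$, $\Theta\subset\mathbb{R}^{m-1}$, of real orthogonal $m\times m$ matrices such that for every nonzero $h\in\mathbb{R}^m$ there is a unique $\theta(h)\in\Theta$ with $\tilde Q(\theta)^*h=\|h\|e_k$. For an ORP of $O(d+1)$ to $e_1$ write $\tilde Q(\theta)=\begin{pmatrix}\mu&y^*\\ x&\tilde O\end{pmatrix}$ with $\mu\in\mathbb{R}$, $x,y\in\mathbb{R}^d$, $\tilde O\in\mathbb{R}^{d\times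 d}$ (all depending on $\theta$). The embedding is the $(n+d)\times(n+d)$ matrix $$Q^{(k)}(\theta)=\mathbb{I}_{k-1}\oplus\begin{pmatrix}\mu&0_{1,n-k}&y^*\\ 0_{n-k,1}&\mathbb{I}_{n-k}&0_{n-k,d}\\ x&0_{d,n-k}&\tilde O\end{pmatrix}.$$ *)

theory Defs
  imports "Jordan_Normal_Form.Matrix"
begin

text \<open>Real matrices of varying sizes are JNF matrices (type real mat) with explicit
  carrier (dimension) constraints. Indices are 0-based; the paper's index k (1-based)
  corresponds to row/column k-1.\<close>

definition OTSON :: "nat \<Rightarrow> nat \<Rightarrow> real mat \<Rightarrow> real mat \<Rightarrow> bool" where
  "OTSON n d A C \<longleftrightarrow>
     A \<in> carrier_mat n n \<and> C \<in> carrier_mat d n \<and>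
     transpose_mat A * A = 1\<^sub>m n - transpose_mat C * C \<and>
     (\<forall>i < n + d. \<forall>j < n. j > i \<longrightarrow> (C @\<^sub>r A) $$ (i, j) = 0)"

definition orthogonal_mat :: "nat \<Rightarrow> real mat \<Rightarrow> bool" where
  "orthogonal_mat m Q \<longleftrightarrow> Q \<in> carrier_mat m m \<and>
     transpose_mat Q * Q = 1\<^sub>m m \<and> Q * transpose_mat Q = 1\<^sub>m m"

definition vnorm :: "real vec \<Rightarrow> real" where
  "vnorm h = sqrt (h \<bullet> h)"

definition ORP :: "nat \<Rightarrow> nat \<Rightarrow> real vec set \<Rightarrow> (real vec \<Rightarrow> real mat) \<Rightarrow> bool" where
  "ORP m k \<Theta> Qt \<longleftrightarrow>
     \<Theta> \<subseteq> carrier_vec (m - 1) \<and>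
     (\<forall>\<theta>\<in>\<Theta>. orthogonal_mat m (Qt \<theta>)) \<and>
     (\<forall>h \<in> carrier_vec m. h \<noteq> 0\<^sub>v m \<longrightarrow>
        (\<exists>!\<theta>. \<theta> \<in> \<Theta> \<and> transpose_mat (Qt \<theta>) *\<^sub>v h = vnorm h \<cdot>\<^sub>v unit_vec m (k - 1)))"

text \<open>The central block
  [[mu, 0, y^T], [0, I_(n-k), 0], [x, 0, O~]] of size (n-k+1+d), where
  Qt = [[mu, y^T], [x, O~]] is (d+1) x (d+1).\<close>
definition emb_block :: "nat \<Rightarrow> nat \<Rightarrow> nat \<Rightarrow> real mat \<Rightarrow> real mat" where
  "emb_block n d k Qt =
     (let r = n - k + 1 + d;
          idx = (\<lambda>a. if a = 0 then Some 0 else if a > n - k then Some (a - (n - k)) else None)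
      in mat r r (\<lambda>(a, b). case (idx a, idx b) of
            (Some p, Some q) \<Rightarrow> Qt $$ (p, q)
          | _ \<Rightarrow> (if a = b then 1 else 0)))"

definition embedding :: "nat \<Rightarrow> nat \<Rightarrow> nat \<Rightarrow> real mat \<Rightarrow> real mat" where
  "embedding n d k Qt =
     (let r = n - k + 1 + d in
      four_block_mat (1\<^sub>m (k - 1)) (0\<^sub>m (k - 1) r) (0\<^sub>m r (k - 1)) (emb_block n d k Qt))"

fun emb_prod :: "nat \<Rightarrow> nat \<Rightarrow> (real vec \<Rightarrow> real mat) \<Rightarrow> (nat \<Rightarrow> real vec) \<Rightarrow> nat \<Rightarrow> real mat" where
  "emb_prod n d Qt \<theta> 0 = 1\<^sub>m (n + d)"
| "emb_prod n d Qt \<theta> (Suc j) = embedding n d (Suc j) (Qt (\<theta> (Suc j))) * emb_prod n d Qt \<theta> j"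

end

theory Submission
  imports Defs
begin

text \<open>The factors are peeled off from the left. Write P for the stack (C over A): it has
  orthonormal columns and vanishes above its diagonal. Suppose its columns k+1, ..., n are already
  the unit vectors e_(k+1), ..., e_n. Orthonormality against these columns and the triangular shape
  force column k to live on the rows k and n+1, ..., n+d, which are exactly the rows on which
  Q^(k)(theta) acts through its block Q~(theta). Restricted to these rows, column k is a unit vector
  h of R^(d+1), so the reduction parameterization supplies theta_k with Q~(theta_k)^T h = e_1, and
  Q^(k)(theta_k)^T P has columns k, ..., n equal to unit vectors without losing the other two
  properties. After n steps what remains is (I over 0).\<close>

lemma index_mult_mat_sum:
  "A \<in> carrier_mat m k \<Longrightarrow> B \<in> carrier_mat k l \<Longrightarrow> i < m \<Longrightarrow> j < l \<Longrightarrow>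
   (A * B) $$ (i, j) = (\<Sum>r<k. A $$ (i, r) * B $$ (r, j))"
  by (simp add: scalar_prod_def atLeast0LessThan)

lemma transpose_append_rows_mult:
  fixes A C :: "'a :: comm_ring_1 mat"
  assumes "A \<in> carrier_mat n k" "C \<in> carrier_mat d k"
  shows "transpose_mat (C @\<^sub>r A) * (C @\<^sub>r A) = transpose_mat C * C + transpose_mat A * A"
proof -
  have stack: "C @\<^sub>r A = four_block_mat C (0\<^sub>m d 0) A (0\<^sub>m n 0)"
    using assms by (simp add: append_rows_def)
  have "transpose_mat (C @\<^sub>r A) * (C @\<^sub>r A) =
    four_block_mat (transpose_mat C) (transpose_mat A) (0\<^sub>m 0 d) (0\<^sub>m 0 n) * (C @\<^sub>r A)"
    unfolding stack using assms by (subst transpose_four_block_mat) auto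
  also have "\<dots> = four_block_mat (transpose_mat C * C + transpose_mat A * A)
      (0\<^sub>m k 0) (0\<^sub>m 0 k) (0\<^sub>m 0 0)"
    unfolding stack using assms
    by (subst mult_four_block_mat[of _ k d _ n]) (auto intro!: cong_four_block_mat)
  also have "\<dots> = transpose_mat C * C + transpose_mat A * A"
    using assms by (intro eq_matI) auto
  finally show ?thesis .
qed

definition orthonormal_cols :: "'a :: comm_ring_1 mat \<Rightarrow> bool" where
  "orthonormal_cols P \<longleftrightarrow> transpose_mat P * P = 1\<^sub>m (dim_col P)"

definition lower_trapezoidal :: "'a :: zero mat \<Rightarrow> bool" where
  "lower_trapezoidal P \<longleftrightarrow> (\<forall>i < dim_row P. \<forall>j < dim_col P. i < j \<longrightarrow> P $$ (i, j) = 0)"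

definition unit_cols_from :: "nat \<Rightarrow> 'a :: zero_neq_one mat \<Rightarrow> bool" where
  "unit_cols_from m P \<longleftrightarrow>
     (\<forall>i < dim_row P. \<forall>j < dim_col P. m \<le> j \<longrightarrow> P $$ (i, j) = (if i = j then 1 else 0))"

lemma orthonormal_cols_mult:
  fixes U P :: "'a :: comm_ring_1 mat"
  assumes U: "U \<in> carrier_mat m m" "transpose_mat U * U = 1\<^sub>m m"
    and P: "P \<in> carrier_mat m k" "orthonormal_cols P"
  shows "orthonormal_cols (U * P)"
proof -
  have "transpose_mat (U * P) * (U * P) = transpose_mat P * (transpose_mat U * (U * P))"
    using U P by (simp add: transpose_mult assoc_mult_mat[of _ k m _ m _ k])
  also have "transpose_mat U * (U * P) = (transpose_mat U * U) * P"
    using U P by (intro assoc_mult_mat[symmetric]) auto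
  finally show ?thesis
    using U P unfolding orthonormal_cols_def by simp
qed

lemma append_rows_of_OTSON:
  assumes "OTSON n d A C"
  shows "C @\<^sub>r A \<in> carrier_mat (n + d) n" "orthonormal_cols (C @\<^sub>r A)"
    "lower_trapezoidal (C @\<^sub>r A)"
proof -
  have A: "A \<in> carrier_mat n n" and C: "C \<in> carrier_mat d n"
    and AA: "transpose_mat A * A = 1\<^sub>m n - transpose_mat C * C"
    and tri: "\<forall>i < n + d. \<forall>j < n. j > i \<longrightarrow> (C @\<^sub>r A) $$ (i, j) = 0"
    using assms unfolding OTSON_def by auto
  show carrier: "C @\<^sub>r A \<in> carrier_mat (n + d) n"
    using A C by (metis add.commute carrier_append_rows)
  have "transpose_mat C * C + (1\<^sub>m n - transpose_mat C * C) = 1\<^sub>m n"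
    using C by (intro eq_matI) auto
  then show "orthonormal_cols (C @\<^sub>r A)"
    using A C carrier unfolding orthonormal_cols_def transpose_append_rows_mult[OF A C] AA by simp
  show "lower_trapezoidal (C @\<^sub>r A)"
    using carrier tri unfolding lower_trapezoidal_def by auto
qed

lemma unit_cols_from_0:
  assumes "P \<in> carrier_mat (n + d) n" "unit_cols_from 0 P"
  shows "P = 1\<^sub>m n @\<^sub>r 0\<^sub>m d n"
  using assms unfolding unit_cols_from_def by (intro eq_matI) (auto simp: append_rows_def)

lemma ORP_reduces_unit_vector:
  assumes "ORP m 1 \<Theta> Qt" "h \<in> carrier_vec m" "h \<bullet> h = 1"
  obtains \<theta> where "\<theta> \<in> \<Theta>" "transpose_mat (Qt \<theta>) *\<^sub>v h = unit_vec m 0"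
proof -
  have "h \<noteq> 0\<^sub>v m"
    using assms(3) by auto
  then have "\<exists>!\<theta>. \<theta> \<in> \<Theta> \<and> transpose_mat (Qt \<theta>) *\<^sub>v h = vnorm h \<cdot>\<^sub>v unit_vec m (1 - 1)"
    using assms(1,2) unfolding ORP_def by blast
  moreover have "vnorm h = 1"
    using assms(3) unfolding vnorm_def by simp
  ultimately show ?thesis
    using that by auto
qed

text \<open>Row and column p of Q~ (0-based) become row and column emb_pos n c p of
  Q^(c+1) = embedding n d (Suc c) Q~; emb_idx n c inverts emb_pos n c on emb_support n d c,
  the rows where Q^(c+1) differs from the identity.\<close>

definition emb_support :: "nat \<Rightarrow> nat \<Rightarrow> nat \<Rightarrow> nat set" where
  "emb_support n d c = insert c {n..<n + d}"

definition emb_pos :: "nat \<Rightarrow> nat \<Rightarrow> nat \<Rightarrow> nat" where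
  "emb_pos n c p = (if p = 0 then c else n + p - 1)"

definition emb_idx :: "nat \<Rightarrow> nat \<Rightarrow> nat \<Rightarrow> nat" where
  "emb_idx n c i = (if i = c then 0 else i + 1 - n)"

definition support_col :: "nat \<Rightarrow> nat \<Rightarrow> nat \<Rightarrow> 'a mat \<Rightarrow> 'a vec" where
  "support_col n d c P = vec (d + 1) (\<lambda>p. P $$ (emb_pos n c p, c))"

context
  fixes n d c :: nat
  assumes c: "c < n"
begin

lemma emb_pos_in_support: "p < d + 1 \<Longrightarrow> emb_pos n c p \<in> emb_support n d c"
  unfolding emb_pos_def emb_support_def by auto

lemma emb_idx_pos [simp]: "emb_idx n c (emb_pos n c p) = p"
  using c unfolding emb_pos_def emb_idx_def by auto

lemma emb_pos_idx: "i \<in> emb_support n d c \<Longrightarrow> emb_pos n c (emb_idx n c i) = i"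
  unfolding emb_pos_def emb_idx_def emb_support_def by auto

lemma emb_idx_less: "i \<in> emb_support n d c \<Longrightarrow> emb_idx n c i < d + 1"
  unfolding emb_idx_def emb_support_def by auto

lemma emb_idx_eq_0_iff: "i \<in> emb_support n d c \<Longrightarrow> emb_idx n c i = 0 \<longleftrightarrow> i = c"
  using c unfolding emb_idx_def emb_support_def by auto

lemma emb_support_less: "i \<in> emb_support n d c \<Longrightarrow> i < n + d"
  using c unfolding emb_support_def by auto

lemma emb_support_below: "i \<in> emb_support n d c \<Longrightarrow> i < n \<Longrightarrow> i = c"
  unfolding emb_support_def by auto

lemma sum_emb_support:
  assumes "\<And>l. l < n + d \<Longrightarrow> l \<notin> emb_support n d c \<Longrightarrow> f l = 0"
  shows "(\<Sum>l<n + d. f l) = (\<Sum>p<d + 1. f (emb_pos n c p))"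
proof -
  have "(\<Sum>l<n + d. f l) = (\<Sum>l\<in>emb_support n d c. f l)"
    using assms emb_support_less by (intro sum.mono_neutral_right) auto
  also have "emb_support n d c = emb_pos n c ` {..<d + 1}"
    using emb_pos_in_support emb_idx_less emb_pos_idx
    by (metis image_eqI image_subsetI lessThan_iff subsetI subset_antisym)
  also have "(\<Sum>l\<in>emb_pos n c ` {..<d + 1}. f l) = (\<Sum>p<d + 1. f (emb_pos n c p))"
    by (intro sum.reindex_cong[OF _ refl refl] inj_onI) (metis emb_idx_pos)
  finally show ?thesis .
qed

lemma dim_embedding [simp]:
  "dim_row (embedding n d (Suc c) Q) = n + d" "dim_col (embedding n d (Suc c) Q) = n + d"
  using c by (simp_all add: embedding_def emb_block_def Let_def)

lemma embedding_carrier: "embedding n d (Suc c) Q \<in> carrier_mat (n + d) (n + d)"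
  by (simp add: carrier_matI)

lemma index_embedding:
  assumes "i < n + d" "j < n + d"
  shows "embedding n d (Suc c) Q $$ (i, j) =
    (if i \<in> emb_support n d c \<and> j \<in> emb_support n d c
     then Q $$ (emb_idx n c i, emb_idx n c j) else if i = j then 1 else 0)"
  using c assms
  by (auto simp: embedding_def emb_block_def Let_def emb_support_def emb_idx_def index_mat_four_block)

lemma index_embedding_mult:
  assumes B: "B \<in> carrier_mat (n + d) m" and ij: "i < n + d" "j < m"
  shows "(embedding n d (Suc c) Q * B) $$ (i, j) =
    (if i \<in> emb_support n d c
     then (\<Sum>p<d + 1. Q $$ (emb_idx n c i, p) * B $$ (emb_pos n c p, j)) else B $$ (i, j))"
proof -
  let ?E = "embedding n d (Suc c) Q"
  have prod: "(?E * B) $$ (i, j) = (\<Sum>l<n + d. ?E $$ (i, l) * B $$ (l, j))"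
    using embedding_carrier B ij by (intro index_mult_mat_sum)
  show ?thesis
  proof (cases "i \<in> emb_support n d c")
    case True
    have "(\<Sum>l<n + d. ?E $$ (i, l) * B $$ (l, j)) =
        (\<Sum>p<d + 1. ?E $$ (i, emb_pos n c p) * B $$ (emb_pos n c p, j))"
      using True ij by (intro sum_emb_support) (auto simp: index_embedding)
    also have "\<dots> = (\<Sum>p<d + 1. Q $$ (emb_idx n c i, p) * B $$ (emb_pos n c p, j))"
      using True ij emb_pos_in_support emb_support_less
      by (intro sum.cong) (auto simp: index_embedding)
    finally show ?thesis
      using True prod by simp
  next
    case False
    have "(\<Sum>l<n + d. ?E $$ (i, l) * B $$ (l, j)) = (\<Sum>l<n + d. if l = i then B $$ (l, j) else 0)"
      using False ij by (intro sum.cong) (auto simp: index_embedding)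
    then show ?thesis
      using False prod ij by simp
  qed
qed

lemma transpose_embedding:
  assumes "Q \<in> carrier_mat (d + 1) (d + 1)"
  shows "transpose_mat (embedding n d (Suc c) Q) = embedding n d (Suc c) (transpose_mat Q)"
proof (rule eq_matI)
  fix i j
  assume "i < dim_row (embedding n d (Suc c) (transpose_mat Q))"
    "j < dim_col (embedding n d (Suc c) (transpose_mat Q))"
  then have "i < n + d" "j < n + d"
    by simp_all
  then show "transpose_mat (embedding n d (Suc c) Q) $$ (i, j) =
      embedding n d (Suc c) (transpose_mat Q) $$ (i, j)"
    using assms emb_idx_less by (auto simp: index_embedding)
qed simp_all

lemma embedding_one: "embedding n d (Suc c) (1\<^sub>m (d + 1)) = 1\<^sub>m (n + d)"
proof (rule eq_matI)
  fix i j
  assume "i < dim_row (1\<^sub>m (n + d))" "j < dim_col (1\<^sub>m (n + d))"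
  then have "i < n + d" "j < n + d"
    by auto
  then show "embedding n d (Suc c) (1\<^sub>m (d + 1)) $$ (i, j) = 1\<^sub>m (n + d) $$ (i, j)"
    using emb_idx_less emb_pos_idx by (simp add: index_embedding) metis
qed simp_all

lemma embedding_mult:
  assumes Q: "Q \<in> carrier_mat (d + 1) (d + 1)" and R: "R \<in> carrier_mat (d + 1) (d + 1)"
  shows "embedding n d (Suc c) Q * embedding n d (Suc c) R = embedding n d (Suc c) (Q * R)"
proof (rule eq_matI)
  fix i j
  assume "i < dim_row (embedding n d (Suc c) (Q * R))" "j < dim_col (embedding n d (Suc c) (Q * R))"
  then have ij: "i < n + d" "j < n + d"
    by simp_all
  have prod: "(embedding n d (Suc c) Q * embedding n d (Suc c) R) $$ (i, j) =
      (if i \<in> emb_support n d c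
       then (\<Sum>p<d + 1. Q $$ (emb_idx n c i, p) * embedding n d (Suc c) R $$ (emb_pos n c p, j))
       else embedding n d (Suc c) R $$ (i, j))"
    by (rule index_embedding_mult[OF embedding_carrier ij])
  show "(embedding n d (Suc c) Q * embedding n d (Suc c) R) $$ (i, j) =
      embedding n d (Suc c) (Q * R) $$ (i, j)"
  proof (cases "i \<in> emb_support n d c \<and> j \<in> emb_support n d c")
    case True
    have "(\<Sum>p<d + 1. Q $$ (emb_idx n c i, p) * embedding n d (Suc c) R $$ (emb_pos n c p, j)) =
        (\<Sum>p<d + 1. Q $$ (emb_idx n c i, p) * R $$ (p, emb_idx n c j))"
      using True ij emb_pos_in_support emb_support_less
      by (intro sum.cong) (auto simp: index_embedding)
    also have "\<dots> = (Q * R) $$ (emb_idx n c i, emb_idx n c j)"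
      using Q R True emb_idx_less by (intro index_mult_mat_sum[symmetric]) auto
    finally show ?thesis
      using True ij prod by (simp add: index_embedding)
  next
    case False
    show ?thesis
    proof (cases "i \<in> emb_support n d c")
      case True
      with False have "j \<notin> emb_support n d c"
        by blast
      then have "(\<Sum>p<d + 1. Q $$ (emb_idx n c i, p) * embedding n d (Suc c) R $$ (emb_pos n c p, j)) = 0"
        using ij emb_pos_in_support emb_support_less
        by (intro sum.neutral) (auto simp: index_embedding)
      then show ?thesis
        using True \<open>j \<notin> emb_support n d c\<close> ij prod by (auto simp: index_embedding)
    next
      case False
      then show ?thesis
        using ij prod by (simp add: index_embedding)
    qed
  qed
qed simp_all

lemma orthogonal_embedding:
  assumes "orthogonal_mat (d + 1) Q"
  shows "orthogonal_mat (n + d) (embedding n d (Suc c) Q)"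
proof -
  have Q: "Q \<in> carrier_mat (d + 1) (d + 1)" "transpose_mat Q * Q = 1\<^sub>m (d + 1)"
    "Q * transpose_mat Q = 1\<^sub>m (d + 1)"
    using assms unfolding orthogonal_mat_def by auto
  have "transpose_mat (embedding n d (Suc c) Q) * embedding n d (Suc c) Q = 1\<^sub>m (n + d)"
    using Q by (simp only: transpose_embedding embedding_mult transpose_carrier_mat embedding_one)
  moreover have "embedding n d (Suc c) Q * transpose_mat (embedding n d (Suc c) Q) = 1\<^sub>m (n + d)"
    using Q by (simp only: transpose_embedding embedding_mult transpose_carrier_mat embedding_one)
  ultimately show ?thesis
    unfolding orthogonal_mat_def using embedding_carrier by blast
qed

lemma column_vanishes_off_emb_support:
  fixes P :: "'a :: comm_ring_1 mat"
  assumes P: "P \<in> carrier_mat (n + d) n" "orthonormal_cols P" "lower_trapezoidal P"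
    "unit_cols_from (Suc c) P"
    and l: "l < n + d" "l \<notin> emb_support n d c"
  shows "P $$ (l, c) = 0"
proof (cases "l < c")
  case True
  then show ?thesis
    using P(1,3) c unfolding lower_trapezoidal_def by auto
next
  case False
  with l have lc: "c < l" "l < n"
    unfolding emb_support_def by auto
  have "(transpose_mat P * P) $$ (l, c) = (\<Sum>r<n + d. P $$ (r, l) * P $$ (r, c))"
    using P(1) lc c by (subst index_mult_mat_sum[of _ n "n + d" P n]) auto
  also have "\<dots> = (\<Sum>r<n + d. if r = l then P $$ (r, c) else 0)"
    using P(1,4) lc unfolding unit_cols_from_def by (intro sum.cong) auto
  also have "\<dots> = P $$ (l, c)"
    using l by simp
  finally show ?thesis
    using P(1,2) lc unfolding orthonormal_cols_def by simp
qed

lemma support_col_unit: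
  fixes P :: "'a :: comm_ring_1 mat"
  assumes P: "P \<in> carrier_mat (n + d) n" "orthonormal_cols P" "lower_trapezoidal P"
    "unit_cols_from (Suc c) P"
  shows "support_col n d c P \<bullet> support_col n d c P = 1"
proof -
  have "support_col n d c P \<bullet> support_col n d c P =
      (\<Sum>p<d + 1. P $$ (emb_pos n c p, c) * P $$ (emb_pos n c p, c))"
    unfolding support_col_def scalar_prod_def by (simp add: atLeast0LessThan)
  also have "\<dots> = (\<Sum>l<n + d. P $$ (l, c) * P $$ (l, c))"
    using column_vanishes_off_emb_support[OF P] by (intro sum_emb_support[symmetric]) simp
  also have "\<dots> = (transpose_mat P * P) $$ (c, c)"
    using P(1) c by (subst index_mult_mat_sum[of _ n "n + d" P n]) auto
  also have "\<dots> = 1"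
    using P(1,2) c unfolding orthonormal_cols_def by simp
  finally show ?thesis .
qed

lemma reduce_column:
  fixes P R :: "real mat"
  assumes P: "P \<in> carrier_mat (n + d) n" "lower_trapezoidal P" "unit_cols_from (Suc c) P"
    and supp: "\<And>l. l < n + d \<Longrightarrow> l \<notin> emb_support n d c \<Longrightarrow> P $$ (l, c) = 0"
    and R: "R \<in> carrier_mat (d + 1) (d + 1)"
      "R *\<^sub>v support_col n d c P = unit_vec (d + 1) 0"
  shows "unit_cols_from c (embedding n d (Suc c) R * P)"
    and "lower_trapezoidal (embedding n d (Suc c) R * P)"
proof -
  let ?P' = "embedding n d (Suc c) R * P"
  have entry: "?P' $$ (i, j) = (if i \<in> emb_support n d c
      then (\<Sum>p<d + 1. R $$ (emb_idx n c i, p) * P $$ (emb_pos n c p, j)) else P $$ (i, j))"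
    if "i < n + d" "j < n" for i j
    by (rule index_embedding_mult[OF P(1) that])
  have later: "?P' $$ (i, j) = (if i = j then 1 else 0)" if ij: "i < n + d" "c < j" "j < n" for i j
  proof (cases "i \<in> emb_support n d c")
    case True
    have j: "j \<notin> emb_support n d c"
      using ij unfolding emb_support_def by auto
    then have "(\<Sum>p<d + 1. R $$ (emb_idx n c i, p) * P $$ (emb_pos n c p, j)) = 0"
      using P(1,3) ij emb_pos_in_support emb_support_less
      by (intro sum.neutral) (auto simp: unit_cols_from_def)
    then show ?thesis
      using entry[of i j] True j ij by auto
  next
    case False
    then show ?thesis
      using entry[of i j] P(1,3) ij unfolding unit_cols_from_def by auto
  qed
  have current: "?P' $$ (i, c) = (if i = c then 1 else 0)" if i: "i < n + d" for i
  proof (cases "i \<in> emb_support n d c")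
    case True
    have "(\<Sum>p<d + 1. R $$ (emb_idx n c i, p) * P $$ (emb_pos n c p, c)) =
        (R *\<^sub>v support_col n d c P) $ emb_idx n c i"
      using R(1) emb_idx_less[OF True]
      by (simp add: support_col_def scalar_prod_def atLeast0LessThan)
    also have "\<dots> = (if i = c then 1 else 0)"
      using R(2) emb_idx_less[OF True] emb_idx_eq_0_iff[OF True] by simp
    finally show ?thesis
      using entry[OF i c] True by simp
  next
    case False
    then show ?thesis
      using entry[OF i c] supp[OF i] unfolding emb_support_def by auto
  qed
  show "unit_cols_from c ?P'"
    unfolding unit_cols_from_def
  proof (intro allI impI)
    fix i j
    assume "i < dim_row ?P'" "j < dim_col ?P'" "c \<le> j"
    then have "i < n + d" "j < n" "c = j \<or> c < j"
      using P(1) by auto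
    then show "?P' $$ (i, j) = (if i = j then 1 else 0)"
      using later current by auto
  qed
  show "lower_trapezoidal ?P'"
    unfolding lower_trapezoidal_def
  proof (intro allI impI)
    fix i j
    assume "i < dim_row ?P'" "j < dim_col ?P'" "i < j"
    then have ij: "i < n + d" "j < n" "i < j"
      using P(1) by auto
    show "?P' $$ (i, j) = 0"
    proof (cases "i \<in> emb_support n d c")
      case True
      then have "i = c"
        using ij emb_support_below by auto
      then show ?thesis
        using later ij by auto
    next
      case False
      then show ?thesis
        using entry[of i j] P(1,2) ij unfolding lower_trapezoidal_def by auto
    qed
  qed
qed

lemma reduction_step:
  assumes orp: "ORP (d + 1) 1 \<Theta> Qt"
    and P: "P \<in> carrier_mat (n + d) n" "orthonormal_cols P" "lower_trapezoidal P"
      "unit_cols_from (Suc c) P"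
  obtains \<theta> P' where "\<theta> \<in> \<Theta>" "P' \<in> carrier_mat (n + d) n" "orthonormal_cols P'"
    "lower_trapezoidal P'" "unit_cols_from c P'" "P = embedding n d (Suc c) (Qt \<theta>) * P'"
proof -
  obtain \<theta> where \<theta>: "\<theta> \<in> \<Theta>"
    "transpose_mat (Qt \<theta>) *\<^sub>v support_col n d c P = unit_vec (d + 1) 0"
    using ORP_reduces_unit_vector[OF orp _ support_col_unit[OF P]]
    by (auto simp: support_col_def)
  have Q: "orthogonal_mat (d + 1) (Qt \<theta>)"
    using orp \<theta>(1) unfolding ORP_def by auto
  define E where "E = embedding n d (Suc c) (Qt \<theta>)"
  have E: "E \<in> carrier_mat (n + d) (n + d)" "E * transpose_mat E = 1\<^sub>m (n + d)"
    using orthogonal_embedding[OF Q] unfolding E_def orthogonal_mat_def by auto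
  have Et: "transpose_mat E = embedding n d (Suc c) (transpose_mat (Qt \<theta>))"
    using Q transpose_embedding unfolding E_def orthogonal_mat_def by auto
  define P' where "P' = transpose_mat E * P"
  have "P' \<in> carrier_mat (n + d) n"
    unfolding P'_def using E P(1) by auto
  moreover have "orthonormal_cols P'"
    unfolding P'_def using E P(1,2) by (intro orthonormal_cols_mult) auto
  moreover have "lower_trapezoidal P'" "unit_cols_from c P'"
    unfolding P'_def Et
    using reduce_column[OF P(1,3,4) column_vanishes_off_emb_support[OF P] _ \<theta>(2)] Q
    unfolding orthogonal_mat_def by auto
  moreover have "P = E * P'"
  proof -
    have "E * P' = (E * transpose_mat E) * P"
      unfolding P'_def using E P(1) by (intro assoc_mult_mat[symmetric]) auto
    then show ?thesis
      using E P(1) by simp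
  qed
  ultimately show ?thesis
    using that \<theta>(1) unfolding E_def by blast
qed

end

lemma emb_prod_carrier: "j \<le> n \<Longrightarrow> emb_prod n d Qt \<theta> j \<in> carrier_mat (n + d) (n + d)"
  by (induction j) (auto intro!: mult_carrier_mat embedding_carrier)

lemma emb_prod_cong:
  "(\<And>k. 1 \<le> k \<Longrightarrow> k \<le> j \<Longrightarrow> \<theta> k = \<theta>' k) \<Longrightarrow> emb_prod n d Qt \<theta> j = emb_prod n d Qt \<theta>' j"
  by (induction j) auto

lemma factor_by_embeddings:
  assumes orp: "ORP (d + 1) 1 \<Theta> Qt"
    and "m \<le> n" "P \<in> carrier_mat (n + d) n" "orthonormal_cols P" "lower_trapezoidal P"
      "unit_cols_from m P"
  shows "\<exists>\<theta>. (\<forall>k\<in>{1..m}. \<theta> k \<in> \<Theta>) \<and> P = emb_prod n d Qt \<theta> m * (1\<^sub>m n @\<^sub>r 0\<^sub>m d n)"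
  using assms(2-)
proof (induction m arbitrary: P)
  case 0
  then have "P = 1\<^sub>m n @\<^sub>r 0\<^sub>m d n"
    by (intro unit_cols_from_0)
  then show ?case
    by (simp add: left_mult_one_mat[of _ "n + d" n])
next
  case (Suc m)
  then have m: "m < n"
    by simp
  obtain \<theta>\<^sub>m P' where \<theta>\<^sub>m: "\<theta>\<^sub>m \<in> \<Theta>" and P': "P' \<in> carrier_mat (n + d) n" "orthonormal_cols P'"
    "lower_trapezoidal P'" "unit_cols_from m P'" and P: "P = embedding n d (Suc m) (Qt \<theta>\<^sub>m) * P'"
    using reduction_step[OF m orp Suc.prems(2-5)] by blast
  obtain \<theta>' where \<theta>': "\<forall>k\<in>{1..m}. \<theta>' k \<in> \<Theta>"
    and P'_eq: "P' = emb_prod n d Qt \<theta>' m * (1\<^sub>m n @\<^sub>r 0\<^sub>m d n)"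
    using Suc.IH[OF _ P'] m by auto
  define \<theta> where "\<theta> = \<theta>'(Suc m := \<theta>\<^sub>m)"
  have "emb_prod n d Qt \<theta> m = emb_prod n d Qt \<theta>' m"
    unfolding \<theta>_def by (rule emb_prod_cong) auto
  then have "P = emb_prod n d Qt \<theta> (Suc m) * (1\<^sub>m n @\<^sub>r 0\<^sub>m d n)"
    unfolding P P'_eq using m emb_prod_carrier[of m n d Qt \<theta>']
    by (simp add: \<theta>_def embedding_carrier assoc_mult_mat[of _ "n + d" "n + d" _ "n + d" _ n])
  moreover have "\<forall>k\<in>{1..Suc m}. \<theta> k \<in> \<Theta>"
    using \<theta>' \<theta>\<^sub>m unfolding \<theta>_def by auto
  ultimately show ?case
    by blast
qed

theorem theorem6p1:
  fixes n d :: nat and A C :: "real mat"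
    and \<Theta> :: "real vec set" and Qt :: "real vec \<Rightarrow> real mat"
  assumes "1 \<le> d" and "d \<le> n"
    and "OTSON n d A C"
    and "ORP (d + 1) 1 \<Theta> Qt"
  shows "\<exists>\<theta> :: nat \<Rightarrow> real vec. (\<forall>k \<in> {1..n}. \<theta> k \<in> \<Theta>) \<and>
           C @\<^sub>r A = emb_prod n d Qt \<theta> n * (1\<^sub>m n @\<^sub>r 0\<^sub>m d n)"
proof -
  note stack = append_rows_of_OTSON[OF assms(3)]
  have "unit_cols_from n (C @\<^sub>r A)"
    using stack(1) unfolding unit_cols_from_def by auto
  then show ?thesis
    using factor_by_embeddings[OF assms(4) order.refl stack] by blast
qed

end
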